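(* Let $q_1,\dots,q_5\in\widehat{\mathbb H}$ be five distinct points and let $q'_1,\dots,q'_5\in\widehat{\mathbb H}$ be five distinct points. Then there exists a fractional linear transformation $T$ with $T(q_n)=q'_n$ for $n=1,\dots,5$ if and only if there exists $a\in\mathbb H^\times$ such that $$Q(q'_1,q'_2,q'_3,q'_4)=aQ(q_1,q_2,q_3,q_4)a^{-1}\quad\text{and}\quad Q(q'_1,q'_2,q'_3,q'_5)=aQ(q_1,q_2,q_3,q_5)a^{-1}.$$
   Context: $\mathbb H$ denotes the quaternions, $\mathbb H^\times=\mathbb H\setminus\{0\}$, $\widehat{\mathbb H}=\mathbb H\cup\{\infty\}$. A fractional linear transformation of $\widehat{\mathbb H}$ is a map $q\mapsto(aq+b)(cq+d)^{-1}$ with $\begin{pmatrix}a&b\\c&d\end{pmatrix}\in GL(2,\mathbb H)$. For four distinct points the cross-ratio is $Q(q_1,q_2,q_3,q_4)=(q_2-q_1)^{-1}(q_4-q_1)(q_4-q_3)^{-1}(q_2-q_3)$, defined by taking limits if some $q_n=\infty$. *)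

theory Defs
  imports Complex_Main
begin

datatype quat = Quat (qre: real) (qi: real) (qj: real) (qk: real)

lemma quat_eq_iff: "x = y \<longleftrightarrow> qre x = qre y \<and> qi x = qi y \<and> qj x = qj y \<and> qk x = qk y"
  by (cases x; cases y) auto

definition qnorm2 :: "quat \<Rightarrow> real" where
  "qnorm2 x = (qre x)^2 + (qi x)^2 + (qj x)^2 + (qk x)^2"

lemma qnorm2_pos: "x \<noteq> Quat 0 0 0 0 \<Longrightarrow> qnorm2 x > 0"
  unfolding qnorm2_def
  by (cases x) (auto simp: sum_power2_gt_zero_iff add_pos_nonneg add_nonneg_pos)

instantiation quat :: division_ring
begin

definition "0 = Quat 0 0 0 0"
definition "1 = Quat 1 0 0 0"
definition "x + y = Quat (qre x + qre y) (qi x + qi y) (qj x + qj y) (qk x + qk y)"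
definition "x - y = Quat (qre x - qre y) (qi x - qi y) (qj x - qj y) (qk x - qk y)"
definition "- x = Quat (- qre x) (- qi x) (- qj x) (- qk x)"
definition "x * y = Quat
   (qre x * qre y - qi x * qi y - qj x * qj y - qk x * qk y)
   (qre x * qi y + qi x * qre y + qj x * qk y - qk x * qj y)
   (qre x * qj y - qi x * qk y + qj x * qre y + qk x * qi y)
   (qre x * qk y + qi x * qj y - qj x * qi y + qk x * qre y)"
definition "inverse x = Quat (qre x / qnorm2 x) (- qi x / qnorm2 x) (- qj x / qnorm2 x) (- qk x / qnorm2 x)"
definition divide_quat_def: "divide (x::quat) y = x * inverse y"

lemma qnorm2_nz: "x \<noteq> Quat 0 0 0 0 \<Longrightarrow> qnorm2 x \<noteq> 0"
  using qnorm2_pos[of x] by simp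

lemma quat_left_inv_aux:
  fixes a :: quat and N :: real
  assumes "N = qnorm2 a" "N \<noteq> 0"
  shows "inverse a * a = 1"
proof -
  obtain r x y z where a: "a = Quat r x y z" by (cases a)
  have N: "N = r*r + x*x + y*y + z*z" using assms(1) by (simp add: a qnorm2_def power2_eq_square)
  have e: "(r / N) * r + (x / N) * x + (y / N) * y + (z / N) * z = 1"
    using assms(2) unfolding N by (simp add: divide_simps)
  show ?thesis using e assms(1)[symmetric]
    by (simp add: a quat_eq_iff times_quat_def inverse_quat_def one_quat_def algebra_simps)
qed

lemma quat_right_inv_aux:
  fixes a :: quat and N :: real
  assumes "N = qnorm2 a" "N \<noteq> 0"
  shows "a * inverse a = 1"
proof -
  obtain r x y z where a: "a = Quat r x y z" by (cases a)
  have N: "N = r*r + x*x + y*y + z*z" using assms(1) by (simp add: a qnorm2_def power2_eq_square)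
  have e: "r * (r / N) + x * (x / N) + y * (y / N) + z * (z / N) = 1"
    using assms(2) unfolding N by (simp add: divide_simps)
  show ?thesis using e assms(1)[symmetric]
    by (simp add: a quat_eq_iff times_quat_def inverse_quat_def one_quat_def algebra_simps)
qed

instance
proof (standard, goal_cases)
  case (12 a)
  then have n: "qnorm2 a \<noteq> 0" using qnorm2_nz[of a] by (auto simp: zero_quat_def)
  then show ?case using quat_left_inv_aux by blast
next
  case (13 a)
  then have n: "qnorm2 a \<noteq> 0" using qnorm2_nz[of a] by (auto simp: zero_quat_def)
  then show ?case using quat_right_inv_aux by blast
qed (simp_all add: quat_eq_iff plus_quat_def zero_quat_def uminus_quat_def minus_quat_def
    times_quat_def one_quat_def algebra_simps divide_quat_def inverse_quat_def qnorm2_def)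

end

text \<open>A point of the extended quaternions is \<open>Some q\<close> for \<open>q\<close> a quaternion, or \<open>None\<close> for
  the point at infinity.\<close>

type_synonym hquat = "quat option"

definition qGL2 :: "quat \<Rightarrow> quat \<Rightarrow> quat \<Rightarrow> quat \<Rightarrow> bool" where
  "qGL2 a b c d \<longleftrightarrow> (\<exists>a' b' c' d'.
     a * a' + b * c' = 1 \<and> a * b' + b * d' = 0 \<and> c * a' + d * c' = 0 \<and> c * b' + d * d' = 1 \<and>
     a' * a + b' * c = 1 \<and> a' * b + b' * d = 0 \<and> c' * a + d' * c = 0 \<and> c' * b + d' * d = 1)"

text \<open>The map q \<mapsto> (aq+b)(cq+d)^{-1} on the extended quaternions, extended by continuity:
  the value is infinity where cq+d = 0, and at infinity the value is a c^{-1} (infinity if c = 0).\<close>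

fun flt :: "quat \<Rightarrow> quat \<Rightarrow> quat \<Rightarrow> quat \<Rightarrow> hquat \<Rightarrow> hquat" where
  "flt a b c d None = (if c = 0 then None else Some (a * inverse c))"
| "flt a b c d (Some q) = (if c * q + d = 0 then None else Some ((a * q + b) * inverse (c * q + d)))"

definition is_flt :: "(hquat \<Rightarrow> hquat) \<Rightarrow> bool" where
  "is_flt T \<longleftrightarrow> (\<exists>a b c d. qGL2 a b c d \<and> T = flt a b c d)"

text \<open>Cross-ratio Q(q1,q2,q3,q4) = (q2-q1)^{-1}(q4-q1)(q4-q3)^{-1}(q2-q3), for distinct points,
  with the values at infinity given by limits (for q2 = infinity: the limit along the real axis).\<close>

fun cross_ratio :: "hquat \<Rightarrow> hquat \<Rightarrow> hquat \<Rightarrow> hquat \<Rightarrow> quat" where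
  "cross_ratio (Some q1) (Some q2) (Some q3) (Some q4) =
     inverse (q2 - q1) * (q4 - q1) * inverse (q4 - q3) * (q2 - q3)"
| "cross_ratio None (Some q2) (Some q3) (Some q4) = inverse (q4 - q3) * (q2 - q3)"
| "cross_ratio (Some q1) None (Some q3) (Some q4) = (q4 - q1) * inverse (q4 - q3)"
| "cross_ratio (Some q1) (Some q2) None (Some q4) = inverse (q2 - q1) * (q4 - q1)"
| "cross_ratio (Some q1) (Some q2) (Some q3) None = inverse (q2 - q1) * (q2 - q3)"
| "cross_ratio _ _ _ _ = 0"

end

theory Submission
  imports Defs
begin

text \<open>Three distinct points \<open>p\<^sub>1, p\<^sub>2, p\<^sub>3\<close> are sent to \<open>0, 1, \<infinity>\<close> by a fractional linear
  transformation, and this transformation sends every other point \<open>x\<close> to the cross-ratio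
  \<open>Q(p\<^sub>1, p\<^sub>2, p\<^sub>3, x)\<close>. Conjugating by these normalisations, a transformation with
  \<open>T(q\<^sub>n) = q'\<^sub>n\<close> exists iff some transformation fixing \<open>0, 1, \<infinity>\<close> maps
  \<open>Q(q\<^sub>1, q\<^sub>2, q\<^sub>3, q\<^sub>n)\<close> to \<open>Q(q'\<^sub>1, q'\<^sub>2, q'\<^sub>3, q'\<^sub>n)\<close> for \<open>n = 4, 5\<close>; and the
  transformations fixing \<open>0, 1, \<infinity>\<close> are exactly the conjugations \<open>x \<mapsto> a x a\<^sup>-\<^sup>1\<close>.\<close>

lemma mult_inverse_cancel_right:
  fixes x y v :: "'a::division_ring"
  assumes "v \<noteq> 0"
  shows "x * v * inverse (y * v) = x * inverse y"
proof (cases "y = 0")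
  case False
  with assms show ?thesis
    by (simp add: nonzero_inverse_mult_distrib mult.assoc flip: mult.assoc[of v])
qed simp

definition hpoint :: "quat \<Rightarrow> quat \<Rightarrow> hquat" where
  "hpoint u v = (if v = 0 then None else Some (u * inverse v))"

lemma hpoint_cases:
  obtains u v where "x = hpoint u v" "u \<noteq> 0 \<or> v \<noteq> 0"
proof (cases x)
  case None
  then show ?thesis using that[of 1 0] by (simp add: hpoint_def)
next
  case (Some q)
  then show ?thesis using that[of q 1] by (simp add: hpoint_def)
qed

lemma flt_hpoint:
  assumes "u \<noteq> 0 \<or> v \<noteq> 0"
  shows "flt a b c d (hpoint u v) = hpoint (a * u + b * v) (c * u + d * v)"
proof (cases "v = 0")
  case True
  then have "u \<noteq> 0" using assms by simp
  with True show ?thesis by (simp add: hpoint_def mult_inverse_cancel_right)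
next
  case False
  define q where "q = u * inverse v"
  have "u = q * v" using False by (simp add: q_def mult.assoc)
  then have "a * u + b * v = (a * q + b) * v" "c * u + d * v = (c * q + d) * v"
    by (simp_all add: algebra_simps)
  with False show ?thesis
    by (simp add: hpoint_def q_def[symmetric] mult_inverse_cancel_right)
qed

lemma qGL2_image_nonzero:
  assumes "qGL2 a b c d" "u \<noteq> 0 \<or> v \<noteq> 0"
  shows "a * u + b * v \<noteq> 0 \<or> c * u + d * v \<noteq> 0"
proof -
  from assms(1) obtain a' b' c' d' where
    "a' * a + b' * c = 1" "a' * b + b' * d = 0" "c' * a + d' * c = 0" "c' * b + d' * d = 1"
    unfolding qGL2_def by blast
  then have "u = a' * (a * u + b * v) + b' * (c * u + d * v)"
    and "v = c' * (a * u + b * v) + d' * (c * u + d * v)"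
    by (simp_all add: algebra_simps flip: mult.assoc distrib_right)
  with assms(2) show ?thesis by auto
qed

lemma flt_flt:
  assumes "qGL2 a' b' c' d'"
  shows "flt a b c d (flt a' b' c' d' x) =
    flt (a * a' + b * c') (a * b' + b * d') (c * a' + d * c') (c * b' + d * d') x"
proof -
  obtain u v where x: "x = hpoint u v" "u \<noteq> 0 \<or> v \<noteq> 0" by (rule hpoint_cases)
  show ?thesis
    unfolding x flt_hpoint[OF x(2)] flt_hpoint[OF qGL2_image_nonzero[OF assms x(2)]]
    by (simp add: algebra_simps)
qed

type_synonym qmat = "quat \<times> quat \<times> quat \<times> quat"

fun qmat_mult :: "qmat \<Rightarrow> qmat \<Rightarrow> qmat" where
  "qmat_mult (a, b, c, d) (a', b', c', d') =
    (a * a' + b * c', a * b' + b * d', c * a' + d * c', c * b' + d * d')"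

definition qmat_invertible :: "qmat \<Rightarrow> bool" where
  "qmat_invertible M \<longleftrightarrow>
    (\<exists>N. qmat_mult M N = (1, 0, 0, 1) \<and> qmat_mult N M = (1, 0, 0, 1))"

lemma qmat_mult_assoc: "qmat_mult (qmat_mult L M) N = qmat_mult L (qmat_mult M N)"
  by (cases L; cases M; cases N) (simp add: algebra_simps)

lemma qmat_mult_one_left [simp]: "qmat_mult (1, 0, 0, 1) M = M"
  and qmat_mult_one_right [simp]: "qmat_mult M (1, 0, 0, 1) = M"
  by (cases M; simp)+

lemma qmat_invertible_mult:
  assumes "qmat_invertible M" "qmat_invertible N"
  shows "qmat_invertible (qmat_mult M N)"
proof -
  obtain M' where M': "qmat_mult M M' = (1, 0, 0, 1)" "qmat_mult M' M = (1, 0, 0, 1)"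
    using assms(1) unfolding qmat_invertible_def by blast
  obtain N' where N': "qmat_mult N N' = (1, 0, 0, 1)" "qmat_mult N' N = (1, 0, 0, 1)"
    using assms(2) unfolding qmat_invertible_def by blast
  have "qmat_mult (qmat_mult M N) (qmat_mult N' M') = (1, 0, 0, 1)"
    by (simp add: qmat_mult_assoc M'(1) flip: qmat_mult_assoc[of N] add: N'(1))
  moreover have "qmat_mult (qmat_mult N' M') (qmat_mult M N) = (1, 0, 0, 1)"
    by (simp add: qmat_mult_assoc N'(2) flip: qmat_mult_assoc[of M'] add: M'(2))
  ultimately show ?thesis unfolding qmat_invertible_def by blast
qed

lemma qGL2_iff_qmat_invertible: "qGL2 a b c d \<longleftrightarrow> qmat_invertible (a, b, c, d)"
  unfolding qGL2_def qmat_invertible_def by auto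

lemma qGL2_mult:
  "qGL2 a b c d \<Longrightarrow> qGL2 a' b' c' d' \<Longrightarrow>
    qGL2 (a * a' + b * c') (a * b' + b * d') (c * a' + d * c') (c * b' + d * d')"
  using qmat_invertible_mult[of "(a, b, c, d)" "(a', b', c', d')"]
  by (simp add: qGL2_iff_qmat_invertible)

lemma qGL2_upper_triangular: "a \<noteq> 0 \<Longrightarrow> d \<noteq> 0 \<Longrightarrow> qGL2 a b 0 d"
  unfolding qGL2_def
  by (rule exI[of _ "inverse a"], rule exI[of _ "- (inverse a * b * inverse d)"], rule exI[of _ 0],
      rule exI[of _ "inverse d"]) (simp add: mult.assoc flip: mult.assoc[of a "inverse a"])

lemma qGL2_lower_triangular: "a \<noteq> 0 \<Longrightarrow> d \<noteq> 0 \<Longrightarrow> qGL2 a 0 c d"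
  unfolding qGL2_def
  by (rule exI[of _ "inverse a"], rule exI[of _ 0], rule exI[of _ "- (inverse d * c * inverse a)"],
      rule exI[of _ "inverse d"]) (simp add: mult.assoc flip: mult.assoc[of d "inverse d"])

lemma qGL2_swap: "qGL2 0 1 1 0"
  unfolding qGL2_def by auto

lemma is_flt_flt: "qGL2 a b c d \<Longrightarrow> is_flt (flt a b c d)"
  unfolding is_flt_def by blast

lemma is_flt_comp:
  assumes "is_flt S" "is_flt T"
  shows "is_flt (S \<circ> T)"
proof -
  obtain a b c d a' b' c' d'
    where "qGL2 a b c d" "S = flt a b c d" "qGL2 a' b' c' d'" "T = flt a' b' c' d'"
    using assms unfolding is_flt_def by blast
  then have "S \<circ> T = flt (a * a' + b * c') (a * b' + b * d') (c * a' + d * c') (c * b' + d * d')"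
    by (simp add: fun_eq_iff flt_flt)
  then show ?thesis
    using \<open>qGL2 a b c d\<close> \<open>qGL2 a' b' c' d'\<close> by (simp add: is_flt_flt qGL2_mult)
qed

lemma is_flt_left_inverse:
  assumes "is_flt T"
  obtains S where "is_flt S" "\<And>x. S (T x) = x"
proof -
  obtain a b c d a' b' c' d' where T: "T = flt a b c d" and
    inv: "a * a' + b * c' = 1" "a * b' + b * d' = 0" "c * a' + d * c' = 0" "c * b' + d * d' = 1"
     "a' * a + b' * c = 1" "a' * b + b' * d = 0" "c' * a + d' * c = 0" "c' * b + d' * d = 1"
    using assms unfolding is_flt_def qGL2_def by blast
  then have "qGL2 a b c d" "qGL2 a' b' c' d'" unfolding qGL2_def by blast+
  moreover have "flt 1 0 0 1 x = x" for x by (cases x) auto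
  ultimately show ?thesis
    using that[of "flt a' b' c' d'"] by (simp add: is_flt_flt T flt_flt inv)
qed

lemma cross_ratio_chart_finite:
  fixes p1 p2 p3 :: quat
  assumes "p1 \<noteq> p2" "p1 \<noteq> p3" "p2 \<noteq> p3"
  obtains N where "is_flt N" "N (Some p1) = Some 0" "N (Some p2) = Some 1" "N (Some p3) = None"
    "\<And>x. x \<notin> {Some p1, Some p2, Some p3} \<Longrightarrow>
      N x = Some (cross_ratio (Some p1) (Some p2) (Some p3) x)"
proof
  define A B where "A = inverse (p2 - p1)" and "B = inverse (p2 - p3)"
  have "A \<noteq> 0" "B \<noteq> 0" and A: "A * (p2 - p1) = 1" and B: "inverse B = p2 - p3"
    using assms by (simp_all add: A_def B_def)
  define N where "N = flt A (- (A * p1)) B (- (B * p3))"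
  have "qGL2 A (- (A * p1)) B (- (B * p3))"
    using qGL2_mult[OF qGL2_lower_triangular[of A "B * (p1 - p3)" B]
        qGL2_upper_triangular[of 1 1 "- p1"]] \<open>A \<noteq> 0\<close> \<open>B \<noteq> 0\<close> assms(2) by (simp add: algebra_simps)
  then show "is_flt N" unfolding N_def by (rule is_flt_flt)
  have N_Some: "N (Some x) =
      (if x = p3 then None else Some (A * (x - p1) * inverse (x - p3) * inverse B))" for x
    using \<open>B \<noteq> 0\<close>
    by (simp add: N_def right_diff_distrib nonzero_inverse_mult_distrib mult.assoc flip: right_diff_distrib)
  have N_None: "N None = Some (A * inverse B)"
    using \<open>B \<noteq> 0\<close> by (simp add: N_def)
  show "N (Some p1) = Some 0" "N (Some p2) = Some 1" "N (Some p3) = None"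
    using assms by (simp_all add: N_Some A B)
  fix x
  assume "x \<notin> {Some p1, Some p2, Some p3}"
  then show "N x = Some (cross_ratio (Some p1) (Some p2) (Some p3) x)"
    by (cases x) (auto simp: N_Some N_None A_def B)
qed

lemma cross_ratio_chart_first_infinite:
  fixes p2 p3 :: quat
  assumes "p2 \<noteq> p3"
  obtains N where "is_flt N" "N None = Some 0" "N (Some p2) = Some 1" "N (Some p3) = None"
    "\<And>x. x \<notin> {None, Some p2, Some p3} \<Longrightarrow> N x = Some (cross_ratio None (Some p2) (Some p3) x)"
proof
  define B where "B = inverse (p2 - p3)"
  have "B \<noteq> 0" and B: "inverse B = p2 - p3"
    using assms by (simp_all add: B_def)
  define N where "N = flt 0 1 B (- (B * p3))"
  have "qGL2 0 1 B (- (B * p3))"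
    using qGL2_mult[OF qGL2_swap qGL2_upper_triangular[of B 1 "- (B * p3)"]] \<open>B \<noteq> 0\<close> by simp
  then show "is_flt N" unfolding N_def by (rule is_flt_flt)
  have N_Some: "N (Some x) = (if x = p3 then None else Some (inverse (x - p3) * inverse B))" for x
    using \<open>B \<noteq> 0\<close> by (simp add: N_def nonzero_inverse_mult_distrib flip: right_diff_distrib)
  show "N None = Some 0"
    using \<open>B \<noteq> 0\<close> by (simp add: N_def)
  show "N (Some p2) = Some 1" "N (Some p3) = None"
    using assms by (simp_all add: N_Some B)
  fix x
  assume "x \<notin> {None, Some p2, Some p3}"
  then show "N x = Some (cross_ratio None (Some p2) (Some p3) x)"
    by (cases x) (auto simp: N_Some B)
qed

lemma cross_ratio_chart_second_infinite:
  fixes p1 p3 :: quat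
  assumes "p1 \<noteq> p3"
  obtains N where "is_flt N" "N (Some p1) = Some 0" "N None = Some 1" "N (Some p3) = None"
    "\<And>x. x \<notin> {Some p1, None, Some p3} \<Longrightarrow> N x = Some (cross_ratio (Some p1) None (Some p3) x)"
proof
  define N where "N = flt 1 (- p1) 1 (- p3)"
  have "qGL2 1 (- p1) 1 (- p3)"
    using qGL2_mult[OF qGL2_lower_triangular[of 1 "p1 - p3" 1] qGL2_upper_triangular[of 1 1 "- p1"]] assms
    by simp
  then show "is_flt N" unfolding N_def by (rule is_flt_flt)
  have N_Some: "N (Some x) = (if x = p3 then None else Some ((x - p1) * inverse (x - p3)))" for x
    by (simp add: N_def)
  show "N (Some p1) = Some 0" "N None = Some 1" "N (Some p3) = None"
    using assms by (simp_all add: N_Some N_def)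
  fix x
  assume "x \<notin> {Some p1, None, Some p3}"
  then show "N x = Some (cross_ratio (Some p1) None (Some p3) x)"
    by (cases x) (auto simp: N_Some)
qed

lemma cross_ratio_chart_third_infinite:
  fixes p1 p2 :: quat
  assumes "p1 \<noteq> p2"
  obtains N where "is_flt N" "N (Some p1) = Some 0" "N (Some p2) = Some 1" "N None = None"
    "\<And>x. x \<notin> {Some p1, Some p2, None} \<Longrightarrow> N x = Some (cross_ratio (Some p1) (Some p2) None x)"
proof
  define A where "A = inverse (p2 - p1)"
  have "A \<noteq> 0" and A: "A * (p2 - p1) = 1"
    using assms by (simp_all add: A_def)
  define N where "N = flt A (- (A * p1)) 0 1"
  show "is_flt N"
    unfolding N_def using \<open>A \<noteq> 0\<close> by (simp add: is_flt_flt qGL2_upper_triangular)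
  have N_Some: "N (Some x) = Some (A * (x - p1))" for x
    by (simp add: N_def right_diff_distrib)
  show "N (Some p1) = Some 0" "N (Some p2) = Some 1"
    by (simp_all add: N_Some A)
  show "N None = None"
    by (simp add: N_def)
  fix x
  assume "x \<notin> {Some p1, Some p2, None}"
  then show "N x = Some (cross_ratio (Some p1) (Some p2) None x)"
    by (cases x) (auto simp: N_Some A_def)
qed

lemma cross_ratio_chart:
  assumes "distinct [p1, p2, p3]"
  obtains N where "is_flt N" "N p1 = Some 0" "N p2 = Some 1" "N p3 = None"
    "\<And>x. x \<notin> {p1, p2, p3} \<Longrightarrow> N x = Some (cross_ratio p1 p2 p3 x)"
proof (cases p1)
  case None
  with assms obtain a2 a3 where "p2 = Some a2" "p3 = Some a3"
    by (cases p2; cases p3) auto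
  with None assms that show ?thesis
    by (auto elim: cross_ratio_chart_first_infinite[of a2 a3])
next
  case (Some a1)
  show ?thesis
  proof (cases p2)
    case None
    with assms Some obtain a3 where "p3 = Some a3" by (cases p3) auto
    with None Some assms that show ?thesis
      by (auto elim: cross_ratio_chart_second_infinite[of a1 a3])
  next
    case (Some a2)
    show ?thesis
    proof (cases p3)
      case None
      with \<open>p1 = Some a1\<close> Some assms that show ?thesis
        by (auto elim: cross_ratio_chart_third_infinite[of a1 a2])
    next
      case (Some a3)
      with \<open>p1 = Some a1\<close> \<open>p2 = Some a2\<close> assms that show ?thesis
        by (auto elim: cross_ratio_chart_finite[of a1 a2 a3])
    qed
  qed
qed

lemma flt_fixing_zero_one_infinity:
  assumes "is_flt S" "S None = None" "S (Some 0) = Some 0" "S (Some 1) = Some 1"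
  obtains e where "e \<noteq> 0" "\<And>x. S (Some x) = Some (e * x * inverse e)"
proof -
  obtain a b c d where S: "S = flt a b c d"
    using assms(1) unfolding is_flt_def by blast
  have "c = 0" using assms(2) by (simp add: S split: if_splits)
  have "d \<noteq> 0" "b * inverse d = 0" using assms(3) by (simp_all add: S \<open>c = 0\<close> split: if_splits)
  then have "b = 0" by simp
  have "a * inverse d = 1" using assms(4) by (simp add: S \<open>c = 0\<close> \<open>b = 0\<close> split: if_splits)
  then have "a = d" using \<open>d \<noteq> 0\<close> by (simp add: field_simps)
  show ?thesis
    using that[of d] \<open>d \<noteq> 0\<close> by (simp add: S \<open>a = d\<close> \<open>b = 0\<close> \<open>c = 0\<close>)
qed

lemma ex_flt_fixing_zero_one_infinity_iff:
  "(\<exists>S. is_flt S \<and> S None = None \<and> S (Some 0) = Some 0 \<and> S (Some 1) = Some 1 \<and>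
      (\<forall>i\<in>I. S (Some (z i)) = Some (w i))) \<longleftrightarrow>
    (\<exists>a. a \<noteq> 0 \<and> (\<forall>i\<in>I. w i = a * z i * inverse a))"
proof
  assume "\<exists>S. is_flt S \<and> S None = None \<and> S (Some 0) = Some 0 \<and> S (Some 1) = Some 1 \<and>
      (\<forall>i\<in>I. S (Some (z i)) = Some (w i))"
  then obtain S where S: "is_flt S" "S None = None" "S (Some 0) = Some 0" "S (Some 1) = Some 1"
      "\<forall>i\<in>I. S (Some (z i)) = Some (w i)"
    by blast
  obtain e where "e \<noteq> 0" "\<And>x. S (Some x) = Some (e * x * inverse e)"
    using flt_fixing_zero_one_infinity[OF S(1-4)] by blast
  with S(5) show "\<exists>a. a \<noteq> 0 \<and> (\<forall>i\<in>I. w i = a * z i * inverse a)"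
    by auto
next
  assume "\<exists>a. a \<noteq> 0 \<and> (\<forall>i\<in>I. w i = a * z i * inverse a)"
  then obtain a where "a \<noteq> 0" "\<forall>i\<in>I. w i = a * z i * inverse a"
    by blast
  moreover have "is_flt (flt a 0 0 a)"
    using \<open>a \<noteq> 0\<close> by (simp add: is_flt_flt qGL2_upper_triangular)
  ultimately show "\<exists>S. is_flt S \<and> S None = None \<and> S (Some 0) = Some 0 \<and> S (Some 1) = Some 1 \<and>
      (\<forall>i\<in>I. S (Some (z i)) = Some (w i))"
    by (intro exI[of _ "flt a 0 0 a"]) simp
qed

lemma ex_flt_transport_iff:
  assumes "is_flt N" "is_flt N'"
  shows "(\<exists>T. is_flt T \<and> (\<forall>i\<in>I. T (p i) = p' i)) \<longleftrightarrow>
    (\<exists>S. is_flt S \<and> (\<forall>i\<in>I. S (N (p i)) = N' (p' i)))"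
proof
  assume "\<exists>T. is_flt T \<and> (\<forall>i\<in>I. T (p i) = p' i)"
  then obtain T where "is_flt T" "\<forall>i\<in>I. T (p i) = p' i" by blast
  moreover obtain M where "is_flt M" "\<And>x. M (N x) = x"
    using is_flt_left_inverse[OF assms(1)] by blast
  ultimately show "\<exists>S. is_flt S \<and> (\<forall>i\<in>I. S (N (p i)) = N' (p' i))"
    using assms(2) by (intro exI[of _ "N' \<circ> T \<circ> M"]) (simp add: is_flt_comp)
next
  assume "\<exists>S. is_flt S \<and> (\<forall>i\<in>I. S (N (p i)) = N' (p' i))"
  then obtain S where "is_flt S" "\<forall>i\<in>I. S (N (p i)) = N' (p' i)" by blast
  moreover obtain M' where "is_flt M'" "\<And>x. M' (N' x) = x"
    using is_flt_left_inverse[OF assms(2)] by blast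
  ultimately show "\<exists>T. is_flt T \<and> (\<forall>i\<in>I. T (p i) = p' i)"
    using assms(1) by (intro exI[of _ "M' \<circ> S \<circ> N"]) (simp add: is_flt_comp)
qed

theorem mainTheorem3:
  fixes q q' :: "nat \<Rightarrow> hquat"
  assumes "distinct [q 1, q 2, q 3, q 4, q 5]"
    and "distinct [q' 1, q' 2, q' 3, q' 4, q' 5]"
  shows "(\<exists>T. is_flt T \<and> (\<forall>n\<in>{1..5}. T (q n) = q' n)) \<longleftrightarrow>
         (\<exists>a::quat. a \<noteq> 0 \<and>
            cross_ratio (q' 1) (q' 2) (q' 3) (q' 4) = a * cross_ratio (q 1) (q 2) (q 3) (q 4) * inverse a \<and>
            cross_ratio (q' 1) (q' 2) (q' 3) (q' 5) = a * cross_ratio (q 1) (q 2) (q 3) (q 5) * inverse a)"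
proof -
  define z z' where "z n = cross_ratio (q 1) (q 2) (q 3) (q n)"
    and "z' n = cross_ratio (q' 1) (q' 2) (q' 3) (q' n)" for n
  have "distinct [q 1, q 2, q 3]" "distinct [q' 1, q' 2, q' 3]"
    using assms by simp_all
  then obtain N N' where N: "is_flt N" "N (q 1) = Some 0" "N (q 2) = Some 1" "N (q 3) = None"
    and N_cross_ratio: "\<And>x. x \<notin> {q 1, q 2, q 3} \<Longrightarrow> N x = Some (cross_ratio (q 1) (q 2) (q 3) x)"
    and N': "is_flt N'" "N' (q' 1) = Some 0" "N' (q' 2) = Some 1" "N' (q' 3) = None"
    and N'_cross_ratio:
      "\<And>x. x \<notin> {q' 1, q' 2, q' 3} \<Longrightarrow> N' x = Some (cross_ratio (q' 1) (q' 2) (q' 3) x)"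
    by (elim cross_ratio_chart) blast
  have "N (q n) = Some (z n)" "N' (q' n) = Some (z' n)" if "n \<in> {4, 5}" for n
    using that assms N_cross_ratio N'_cross_ratio by (auto simp: z_def z'_def)
  moreover have "{1..5} = {1, 2, 3, 4, 5::nat}" by auto
  ultimately have "(\<exists>T. is_flt T \<and> (\<forall>n\<in>{1..5}. T (q n) = q' n)) \<longleftrightarrow>
      (\<exists>S. is_flt S \<and> S None = None \<and> S (Some 0) = Some 0 \<and> S (Some 1) = Some 1 \<and>
        (\<forall>n\<in>{4, 5}. S (Some (z n)) = Some (z' n)))"
    using ex_flt_transport_iff[OF N(1) N'(1), of "{1..5}" q q'] N N' by (simp add: conj_ac)
  also have "\<dots> \<longleftrightarrow> (\<exists>a. a \<noteq> 0 \<and> (\<forall>n\<in>{4, 5}. z' n = a * z n * inverse a))"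
    by (rule ex_flt_fixing_zero_one_infinity_iff)
  finally show ?thesis by (simp add: z_def z'_def)
qed

end
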